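(* Let $\Gamma$ be an immersed, connected, $C^2$ planar curve with total curvature $\int_\Gamma|\kappa|\,ds\le\alpha\pi$ for some positive integer $\alpha$. Then $\mathrm{Ent}[\Gamma]\le 4\alpha\sqrt{2}$.
   Context: $\kappa$ is the signed curvature and $ds$ arc length. For a curve $\Gamma$, $F_{x_0,\lambda}[\Gamma]=\frac{1}{\sqrt{4\pi\lambda}}\int_\Gamma e^{-|x-x_0|^2/(4\lambda)}\,ds$ (integral over the parametrization) and $\mathrm{Ent}[\Gamma]=\sup_{x_0\in\mathbb{R}^2,\lambda>0}F_{x_0,\lambda}[\Gamma]$. *)

theory Defs
  imports "HOL-Analysis.Analysis"
begin

text \<open>Planar curves are maps gamma :: real => real^2 on an interval I, with
first and second derivatives d1, d2 supplied explicitly.\<close>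

definition cross2 :: "real^2 \<Rightarrow> real^2 \<Rightarrow> real" where
  "cross2 u v = u$1 * v$2 - u$2 * v$1"

definition signed_curvature :: "(real \<Rightarrow> real^2) \<Rightarrow> (real \<Rightarrow> real^2) \<Rightarrow> real \<Rightarrow> real" where
  "signed_curvature d1 d2 t = cross2 (d1 t) (d2 t) / norm (d1 t) ^ 3"

definition total_curvature ::
  "(real \<Rightarrow> real^2) \<Rightarrow> (real \<Rightarrow> real^2) \<Rightarrow> real set \<Rightarrow> ennreal" where
  "total_curvature d1 d2 I =
     (\<integral>\<^sup>+ t\<in>I. ennreal (\<bar>signed_curvature d1 d2 t\<bar> * norm (d1 t)) \<partial>lborel)"

definition gauss_F ::
  "(real \<Rightarrow> real^2) \<Rightarrow> (real \<Rightarrow> real^2) \<Rightarrow> real set \<Rightarrow> real^2 \<Rightarrow> real \<Rightarrow> ennreal" where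
  "gauss_F gamma d1 I x0 lam =
     ennreal (1 / sqrt (4 * pi * lam)) *
     (\<integral>\<^sup>+ t\<in>I. ennreal (exp (- (norm (gamma t - x0))\<^sup>2 / (4 * lam)) * norm (d1 t)) \<partial>lborel)"

definition entropy ::
  "(real \<Rightarrow> real^2) \<Rightarrow> (real \<Rightarrow> real^2) \<Rightarrow> real set \<Rightarrow> ennreal" where
  "entropy gamma d1 I = (SUP p \<in> UNIV \<times> {0<..}. gauss_F gamma d1 I (fst p) (snd p))"

end

theory Submission
  imports Defs "HOL-Probability.Distributions"
begin

text \<open>The unit tangent \<open>T = sgn \<gamma>'\<close> moves with speed \<open>|\<kappa>| |\<gamma>'|\<close>, so \<open>|T t - T s|\<close>
is at most the curvature accumulated between \<open>s\<close> and \<open>t\<close>. Cutting the parameter interval at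
the levels \<open>k \<pi>/4\<close> of the accumulated curvature gives at most \<open>4\<alpha>\<close> pieces, on each of which
\<open>T\<close> stays within \<open>\<pi>/8\<close> of the tangent \<open>e = T c\<close> at a suitable point \<open>c\<close>, whence
\<open>\<langle>\<gamma>', e\<rangle> \<ge> 7/8 |\<gamma>'|\<close>. On such a piece \<open>\<langle>\<gamma>, e\<rangle>\<close> is a monotone reparametrisation and
the Gaussian weight can only grow under projection onto \<open>e\<close>, so by a change of variables the
piece contributes at most \<open>(8/7) \<surd>(4\<pi>\<lambda>) \<le> \<surd>2 \<surd>(4\<pi>\<lambda>)\<close>.\<close>

lemma atLeastAtMost_subset_interval:
  fixes I :: "real set"
  assumes "is_interval I" "s \<in> I" "t \<in> I"
  shows "{s..t} \<subseteq> I"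
proof
  fix x assume "x \<in> {s..t}"
  then show "x \<in> I"
    using mem_is_interval_1_I[OF assms] by simp
qed

lemma cross2_sq: "(cross2 u v)\<^sup>2 = (norm u)\<^sup>2 * (norm v)\<^sup>2 - (inner u v)\<^sup>2"
proof -
  have "(norm x)\<^sup>2 = x$1 * x$1 + x$2 * x$2" for x :: "real^2"
    by (simp add: power2_norm_eq_inner inner_vec_def sum_2)
  then show ?thesis
    by (simp add: cross2_def inner_vec_def sum_2 power2_eq_square algebra_simps)
qed

lemma norm_sgn_derivative_sq:
  fixes a b :: "'a::real_inner"
  assumes "a \<noteq> 0"
  shows "(norm (b /\<^sub>R norm a - (inner a b / norm a ^ 3) *\<^sub>R a))\<^sup>2
           = ((norm a)\<^sup>2 * (norm b)\<^sup>2 - (inner a b)\<^sup>2) / norm a ^ 4"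
proof -
  have aa: "norm a * norm a = inner a a" and bb: "norm b * norm b = inner b b"
    by (metis power2_eq_square power2_norm_eq_inner)+
  have "(norm (b /\<^sub>R norm a - (inner a b / norm a ^ 3) *\<^sub>R a))\<^sup>2
     = inner b b / (norm a)\<^sup>2 - 2 * (inner a b)\<^sup>2 / norm a ^ 4
       + (inner a b)\<^sup>2 * inner a a / norm a ^ 6"
    unfolding power2_norm_eq_inner
    using aa by (simp add: inner_diff_left inner_diff_right inner_commute power2_eq_square
        eval_nat_numeral field_simps)
  also have "\<dots> = ((norm a)\<^sup>2 * (norm b)\<^sup>2 - (inner a b)\<^sup>2) / norm a ^ 4"
    using assms aa bb by (simp add: field_simps eval_nat_numeral)
  finally show ?thesis .
qed

lemma has_vector_derivative_sgn:
  fixes f :: "real \<Rightarrow> 'a::real_inner"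
  assumes f: "(f has_vector_derivative v) (at t within S)" and nz: "f t \<noteq> 0"
  shows "((\<lambda>t. sgn (f t)) has_vector_derivative
           (v /\<^sub>R norm (f t) - (inner (f t) v / norm (f t) ^ 3) *\<^sub>R f t)) (at t within S)"
proof -
  have "((\<lambda>t. norm (f t)) has_vector_derivative inner (sgn (f t)) v) (at t within S)"
    unfolding has_vector_derivative_def
    by (rule has_derivative_eq_rhs[OF has_derivative_compose[OF
          f[unfolded has_vector_derivative_def] has_derivative_norm[OF nz]]])
      (simp add: fun_eq_iff inner_commute)
  then have "((\<lambda>t. norm (f t)) has_real_derivative inner (f t) v / norm (f t)) (at t within S)"
    by (simp add: has_real_derivative_iff_has_vector_derivative sgn_div_norm divide_inverse_commute)
  from DERIV_inverse_fun[OF this] nz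
  have "((\<lambda>t. inverse (norm (f t))) has_real_derivative - inner (f t) v / norm (f t) ^ 3)
      (at t within S)"
    by (simp add: power2_eq_square power3_eq_cube divide_simps mult.assoc)
  from has_vector_derivative_scaleR[OF this f] show ?thesis
    by (simp add: sgn_div_norm algebra_simps divide_inverse_commute)
qed

lemma norm_derivative_sgn_eq_curvature:
  assumes "d1 t \<noteq> 0"
  shows "norm (d2 t /\<^sub>R norm (d1 t) - (inner (d1 t) (d2 t) / norm (d1 t) ^ 3) *\<^sub>R d1 t)
           = \<bar>signed_curvature d1 d2 t\<bar> * norm (d1 t)"
proof (rule power2_eq_imp_eq)
  have "(\<bar>signed_curvature d1 d2 t\<bar> * norm (d1 t))\<^sup>2 = (cross2 (d1 t) (d2 t))\<^sup>2 / norm (d1 t) ^ 4"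
    using assms by (simp add: signed_curvature_def power_divide power_mult_distrib eval_nat_numeral
        field_simps)
  then show "(norm (d2 t /\<^sub>R norm (d1 t) - (inner (d1 t) (d2 t) / norm (d1 t) ^ 3) *\<^sub>R d1 t))\<^sup>2
      = (\<bar>signed_curvature d1 d2 t\<bar> * norm (d1 t))\<^sup>2"
    by (simp add: norm_sgn_derivative_sq[OF assms] cross2_sq)
qed simp_all

lemma norm_diff_le_integral:
  fixes f :: "real \<Rightarrow> 'a::banach"
  assumes "s \<le> t"
    and f: "\<And>x. x \<in> {s..t} \<Longrightarrow> (f has_vector_derivative f' x) (at x within {s..t})"
    and g: "g integrable_on {s..t}"
    and bound: "\<And>x. x \<in> {s..t} \<Longrightarrow> norm (f' x) \<le> g x"
  shows "norm (f t - f s) \<le> integral {s..t} g"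
proof -
  have f': "(f' has_integral (f t - f s)) {s..t}"
    by (rule fundamental_theorem_of_calculus[OF \<open>s \<le> t\<close> f])
  then have "norm (f t - f s) = norm (integral {s..t} f')"
    by (simp add: integral_unique)
  also have "\<dots> \<le> integral {s..t} g"
    by (rule integral_norm_bound_integral[OF has_integral_integrable[OF f'] g bound])
  finally show ?thesis .
qed

lemma integral_le_total_curvature:
  assumes "{s..t} \<subseteq> I"
    and "(\<lambda>t. \<bar>signed_curvature d1 d2 t\<bar> * norm (d1 t)) integrable_on {s..t}"
  shows "ennreal (integral {s..t} (\<lambda>t. \<bar>signed_curvature d1 d2 t\<bar> * norm (d1 t)))
           \<le> total_curvature d1 d2 I"
proof -
  have "ennreal (integral {s..t} (\<lambda>t. \<bar>signed_curvature d1 d2 t\<bar> * norm (d1 t)))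
      = (\<integral>\<^sup>+x\<in>{s..t}. ennreal (\<bar>signed_curvature d1 d2 x\<bar> * norm (d1 x)) \<partial>lborel)"
    by (rule nn_integral_has_integral_lebesgue'[symmetric])
      (simp_all add: integrable_integral assms(2))
  also have "\<dots> \<le> total_curvature d1 d2 I"
    unfolding total_curvature_def using assms(1)
    by (intro nn_integral_mono) (auto split: split_indicator)
  finally show ?thesis .
qed

lemma exists_cumulative_integral:
  fixes g :: "real \<Rightarrow> real"
  assumes I: "is_interval I" and g: "continuous_on I g"
  obtains K where "\<And>s t. s \<in> I \<Longrightarrow> t \<in> I \<Longrightarrow> s \<le> t \<Longrightarrow> K t - K s = integral {s..t} g"
    and "\<And>s t. s \<in> I \<Longrightarrow> t \<in> I \<Longrightarrow> s \<le> t \<Longrightarrow> continuous_on {s..t} K"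
proof (cases "I = {}")
  case True
  then show ?thesis
    using that by blast
next
  case False
  then obtain t0 where t0: "t0 \<in> I" by blast
  have g_int: "g integrable_on {s..t}" if "s \<in> I" "t \<in> I" for s t
    by (rule integrable_continuous_interval[OF continuous_on_subset[OF g
          atLeastAtMost_subset_interval[OF I that]]])
  define K where "K t = (if t0 \<le> t then integral {t0..t} g else - integral {t..t0} g)" for t
  have K_diff: "K t - K s = integral {s..t} g" if st: "s \<in> I" "t \<in> I" "s \<le> t" for s t
  proof -
    consider "t0 \<le> s" | "s < t0" "t0 \<le> t" | "t < t0" by linarith
    then show ?thesis
    proof cases
      case 1
      then show ?thesis
        using Henstock_Kurzweil_Integration.integral_combine[OF 1 st(3) g_int[OF t0 st(2)]] st(3)
        by (simp add: K_def)
    next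
      case 2
      then show ?thesis
        using Henstock_Kurzweil_Integration.integral_combine[of s t0 t g] g_int[OF st(1,2)]
        by (simp add: K_def)
    next
      case 3
      then show ?thesis
        using Henstock_Kurzweil_Integration.integral_combine[of s t t0 g] g_int[OF st(1) t0] st(3)
        by (simp add: K_def)
    qed
  qed
  have "continuous_on {s..t} K" if st: "s \<in> I" "t \<in> I" "s \<le> t" for s t
  proof (rule continuous_on_eq)
    show "continuous_on {s..t} (\<lambda>u. K s + integral {s..u} g)"
      by (intro continuous_intros indefinite_integral_continuous_1 g_int[OF st(1,2)])
    fix u assume "u \<in> {s..t}"
    with atLeastAtMost_subset_interval[OF I st(1,2)] K_diff[OF st(1), of u]
    show "K s + integral {s..u} g = K u"
      by auto
  qed
  with K_diff that show ?thesis by blast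
qed

lemma exists_nat_level:
  fixes x :: real and n :: nat
  assumes "0 \<le> x" "x \<le> n" "n \<ge> 1"
  obtains k where "k < n" "real k \<le> x" "x \<le> real k + 1"
proof
  show "min (nat \<lfloor>x\<rfloor>) (n - 1) < n"
    using assms(3) by simp
  show "real (min (nat \<lfloor>x\<rfloor>) (n - 1)) \<le> x" "x \<le> real (min (nat \<lfloor>x\<rfloor>) (n - 1)) + 1"
    using assms by (auto simp: min_def of_nat_diff) linarith+
qed

lemma interval_partition_by_levels:
  fixes K :: "real \<Rightarrow> real" and n :: nat and w :: real
  assumes I: "is_interval I" and n: "n \<ge> 1" and w: "w > 0"
    and mono: "\<And>s t. s \<in> I \<Longrightarrow> t \<in> I \<Longrightarrow> s \<le> t \<Longrightarrow> K s \<le> K t"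
    and osc: "\<And>s t. s \<in> I \<Longrightarrow> t \<in> I \<Longrightarrow> K t - K s \<le> n * w"
  obtains P :: "nat \<Rightarrow> real set"
    where "\<And>k. is_interval (P k)" "\<And>k. P k \<subseteq> I" "I \<subseteq> (\<Union>k<n. P k)"
      "\<And>k. \<exists>lo. \<forall>t\<in>P k. lo \<le> K t \<and> K t \<le> lo + w"
proof (cases "I = {}")
  case True
  then show ?thesis
    by (intro that[of "\<lambda>_. {}"]) auto
next
  case False
  then obtain t0 where t0: "t0 \<in> I" by blast
  define m where "m = Inf (K ` I)"
  have bdd: "bdd_below (K ` I)"
    using osc[OF _ t0] by (intro bdd_belowI2[of _ "K t0 - n * w"]) (simp add: algebra_simps)
  have m_le: "m \<le> K t" if "t \<in> I" for t
    unfolding m_def using bdd that by (simp add: cInf_lower)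
  have le_m: "K t \<le> m + n * w" if t: "t \<in> I" for t
  proof -
    have "K t - n * w \<le> K s" if "s \<in> I" for s
      using osc[OF that t] by simp
    then have "K t - n * w \<le> m"
      unfolding m_def using False by (intro cInf_greatest) auto
    then show ?thesis by simp
  qed
  define P where "P k = {t \<in> I. m + k * w \<le> K t \<and> K t \<le> m + (k + 1) * w}" for k :: nat
  show ?thesis
  proof (rule that)
    show "is_interval (P k)" for k
      unfolding is_interval_1
    proof (intro ballI allI impI)
      fix a b x assume "a \<in> P k" "b \<in> P k" "a \<le> x \<and> x \<le> b"
      moreover from this have "x \<in> I"
        using mem_is_interval_1_I[OF I] by (auto simp: P_def)
      ultimately show "x \<in> P k"
        using mono[of a x] mono[of x b] by (auto simp: P_def)
    qed
    show "P k \<subseteq> I" for k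
      by (auto simp: P_def)
    show "I \<subseteq> (\<Union>k<n. P k)"
    proof
      fix t assume t: "t \<in> I"
      define x where "x = (K t - m) / w"
      have x: "0 \<le> x" "x \<le> n"
        using m_le[OF t] le_m[OF t] w by (simp_all add: x_def field_simps)
      obtain k where "k < n" "real k \<le> x" "x \<le> real k + 1"
        using exists_nat_level[OF x n] .
      moreover from this(2,3) have "m + k * w \<le> K t \<and> K t \<le> m + (k + 1) * w"
        using w by (simp add: x_def field_simps)
      ultimately show "t \<in> (\<Union>k<n. P k)"
        using t by (auto simp: P_def)
    qed
    show "\<exists>lo. \<forall>t\<in>P k. lo \<le> K t \<and> K t \<le> lo + w" for k
      by (rule exI[of _ "m + k * w"]) (auto simp: P_def algebra_simps)
  qed
qed

lemma exists_level_center: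
  fixes K :: "real \<Rightarrow> real"
  assumes I: "is_interval I" and S: "S \<subseteq> I" "S \<noteq> {}"
    and cont: "\<And>s t. s \<in> I \<Longrightarrow> t \<in> I \<Longrightarrow> s \<le> t \<Longrightarrow> continuous_on {s..t} K"
    and range: "\<And>t. t \<in> S \<Longrightarrow> lo \<le> K t \<and> K t \<le> lo + 2 * r"
  obtains c where "c \<in> I" "\<And>t. t \<in> S \<Longrightarrow> \<bar>K t - K c\<bar> \<le> r"
proof -
  define mid where "mid = lo + r"
  consider (straddle) t1 t2 where "t1 \<in> S" "t2 \<in> S" "K t1 \<le> mid" "mid \<le> K t2"
    | (above) "\<forall>t\<in>S. mid < K t" | (below) "\<forall>t\<in>S. K t < mid"
    by (meson not_le)
  then show ?thesis
  proof cases
    case straddle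
    then have "t1 \<in> I" "t2 \<in> I" using S(1) by auto
    have "\<exists>c. min t1 t2 \<le> c \<and> c \<le> max t1 t2 \<and> K c = mid"
    proof (cases "t1 \<le> t2")
      case True
      then show ?thesis
        using IVT'[OF straddle(3,4) True cont[OF \<open>t1 \<in> I\<close> \<open>t2 \<in> I\<close> True]] by auto
    next
      case False
      then show ?thesis
        using IVT2'[OF straddle(3,4) _ cont[OF \<open>t2 \<in> I\<close> \<open>t1 \<in> I\<close>]] by auto
    qed
    then obtain c where "c \<in> {min t1 t2..max t1 t2}" "K c = mid" by auto
    moreover have "{min t1 t2..max t1 t2} \<subseteq> I"
      by (rule atLeastAtMost_subset_interval[OF I])
        (use \<open>t1 \<in> I\<close> \<open>t2 \<in> I\<close> in \<open>auto simp: min_def max_def\<close>)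
    ultimately show ?thesis
      by (intro that[of c]) (auto simp: mid_def abs_le_iff dest: range)
  next
    case above
    obtain t1 where "t1 \<in> S" using S(2) by blast
    then show ?thesis
      using above range[OF \<open>t1 \<in> S\<close>] range S(1)
      by (intro that[of t1]) (fastforce simp: mid_def abs_le_iff)+
  next
    case below
    obtain t1 where "t1 \<in> S" using S(2) by blast
    then show ?thesis
      using below range[OF \<open>t1 \<in> S\<close>] range S(1)
      by (intro that[of t1]) (fastforce simp: mid_def abs_le_iff)+
  qed
qed

lemma exists_turning_function:
  fixes d1 d2 :: "real \<Rightarrow> real^2"
  assumes I: "is_interval I"
    and d2: "\<And>t. t \<in> I \<Longrightarrow> (d1 has_vector_derivative d2 t) (at t within I)"
    and cont2: "continuous_on I d2"
    and immersed: "\<And>t. t \<in> I \<Longrightarrow> d1 t \<noteq> 0"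
    and tc: "total_curvature d1 d2 I \<le> ennreal L" and L: "0 \<le> L"
  obtains K :: "real \<Rightarrow> real"
    where "\<And>s t. s \<in> I \<Longrightarrow> t \<in> I \<Longrightarrow> s \<le> t \<Longrightarrow> K s \<le> K t"
      and "\<And>s t. s \<in> I \<Longrightarrow> t \<in> I \<Longrightarrow> s \<le> t \<Longrightarrow> K t - K s \<le> L"
      and "\<And>s t. s \<in> I \<Longrightarrow> t \<in> I \<Longrightarrow> s \<le> t \<Longrightarrow> continuous_on {s..t} K"
      and "\<And>s t. s \<in> I \<Longrightarrow> t \<in> I \<Longrightarrow> s \<le> t \<Longrightarrow> norm (sgn (d1 t) - sgn (d1 s)) \<le> K t - K s"
proof -
  define g where "g t = \<bar>signed_curvature d1 d2 t\<bar> * norm (d1 t)" for t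
  have "continuous_on I g"
    unfolding g_def signed_curvature_def cross2_def
    by (intro continuous_intros continuous_on_vector_derivative[OF d2] cont2) (use immersed in auto)
  then have g_int: "g integrable_on {s..t}" if "s \<in> I" "t \<in> I" for s t
    using atLeastAtMost_subset_interval[OF I that]
    by (meson continuous_on_subset integrable_continuous_interval)
  obtain K where K_diff: "\<And>s t. s \<in> I \<Longrightarrow> t \<in> I \<Longrightarrow> s \<le> t \<Longrightarrow> K t - K s = integral {s..t} g"
    and K_cont: "\<And>s t. s \<in> I \<Longrightarrow> t \<in> I \<Longrightarrow> s \<le> t \<Longrightarrow> continuous_on {s..t} K"
    using exists_cumulative_integral[OF I \<open>continuous_on I g\<close>] by blast
  show ?thesis
  proof (rule that[OF _ _ K_cont])
    fix s t assume st: "s \<in> I" "t \<in> I" "s \<le> t"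
    show "K s \<le> K t"
      using K_diff[OF st] integral_nonneg[OF g_int[OF st(1,2)]] by (simp add: g_def)
    have "ennreal (integral {s..t} g) \<le> ennreal L"
      using integral_le_total_curvature[OF atLeastAtMost_subset_interval[OF I st(1,2)]]
        g_int[OF st(1,2)] tc
      unfolding g_def by (meson order.trans)
    then show "K t - K s \<le> L"
      using K_diff[OF st] L by (simp add: ennreal_le_iff)
    have "norm (sgn (d1 t) - sgn (d1 s)) \<le> integral {s..t} g"
    proof (rule norm_diff_le_integral[OF \<open>s \<le> t\<close> _ g_int[OF st(1,2)]])
      fix x assume "x \<in> {s..t}"
      then have "x \<in> I"
        using atLeastAtMost_subset_interval[OF I st(1,2)] by blast
      show "((\<lambda>t. sgn (d1 t)) has_vector_derivative
          (d2 x /\<^sub>R norm (d1 x) - (inner (d1 x) (d2 x) / norm (d1 x) ^ 3) *\<^sub>R d1 x))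
          (at x within {s..t})"
        by (rule has_vector_derivative_within_subset[OF has_vector_derivative_sgn[OF d2 immersed]
              atLeastAtMost_subset_interval[OF I st(1,2)]]) (use \<open>x \<in> I\<close> in simp_all)
      show "norm (d2 x /\<^sub>R norm (d1 x) - (inner (d1 x) (d2 x) / norm (d1 x) ^ 3) *\<^sub>R d1 x) \<le> g x"
        unfolding g_def
        by (simp add: norm_derivative_sgn_eq_curvature[of d1 x d2, OF immersed[OF \<open>x \<in> I\<close>]])
    qed
    with K_diff[OF st] show "norm (sgn (d1 t) - sgn (d1 s)) \<le> K t - K s"
      by simp
  qed
qed

lemma inner_sgn_ge_of_norm_sgn_diff_le:
  fixes x y :: "'a::real_inner"
  assumes "x \<noteq> 0" "y \<noteq> 0" and close: "norm (sgn x - sgn y) \<le> 1 / 2"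
  shows "7 / 8 * norm x \<le> inner x (sgn y)"
proof -
  have "(norm (sgn x - sgn y))\<^sup>2 \<le> (1 / 2)\<^sup>2"
    by (rule power_mono[OF close]) simp
  moreover have "inner (sgn x) (sgn y) = (2 - (norm (sgn x - sgn y))\<^sup>2) / 2"
    using assms(1,2) by (simp add: dot_norm_neg norm_sgn)
  ultimately have "7 / 8 \<le> inner (sgn x) (sgn y)"
    by (simp add: power_divide)
  then have "norm x * (7 / 8) \<le> norm x * inner (sgn x) (sgn y)"
    by (rule mult_left_mono) simp
  also have "\<dots> = inner x (sgn y)"
    using assms(1) by (simp add: sgn_div_norm field_simps)
  finally show ?thesis
    by (simp add: mult.commute)
qed

lemma curve_partition_into_turning_pieces:
  fixes d1 d2 :: "real \<Rightarrow> real^2" and \<alpha> :: nat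
  assumes I: "is_interval I"
    and d2: "\<And>t. t \<in> I \<Longrightarrow> (d1 has_vector_derivative d2 t) (at t within I)"
    and cont2: "continuous_on I d2"
    and immersed: "\<And>t. t \<in> I \<Longrightarrow> d1 t \<noteq> 0"
    and \<alpha>: "\<alpha> \<ge> 1"
    and tc: "total_curvature d1 d2 I \<le> ennreal (real \<alpha> * pi)"
  obtains P :: "nat \<Rightarrow> real set"
    where "\<And>k. is_interval (P k)" "\<And>k. P k \<subseteq> I" "I \<subseteq> (\<Union>k<4 * \<alpha>. P k)"
      "\<And>k. \<exists>e. norm e = 1 \<and> (\<forall>t\<in>P k. 7/8 * norm (d1 t) \<le> inner (d1 t) e)"
proof -
  have "0 \<le> real \<alpha> * pi" by simp
  then obtain K where K_mono: "\<And>s t. s \<in> I \<Longrightarrow> t \<in> I \<Longrightarrow> s \<le> t \<Longrightarrow> K s \<le> K t"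
    and K_osc: "\<And>s t. s \<in> I \<Longrightarrow> t \<in> I \<Longrightarrow> s \<le> t \<Longrightarrow> K t - K s \<le> real \<alpha> * pi"
    and K_cont: "\<And>s t. s \<in> I \<Longrightarrow> t \<in> I \<Longrightarrow> s \<le> t \<Longrightarrow> continuous_on {s..t} K"
    and chord: "\<And>s t. s \<in> I \<Longrightarrow> t \<in> I \<Longrightarrow> s \<le> t \<Longrightarrow> norm (sgn (d1 t) - sgn (d1 s)) \<le> K t - K s"
    using exists_turning_function[OF I d2 cont2 immersed tc] by blast
  have osc: "K t - K s \<le> real (4 * \<alpha>) * (pi / 4)" if "s \<in> I" "t \<in> I" for s t
  proof (cases "s \<le> t")
    case True
    then show ?thesis using K_osc[OF that] by simp
  next
    case False
    then have "K t - K s \<le> 0" using K_mono[OF that(2,1)] by simp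
    also have "0 \<le> real (4 * \<alpha>) * (pi / 4)" by simp
    finally show ?thesis .
  qed
  obtain P where P: "\<And>k. is_interval (P k)" "\<And>k. P k \<subseteq> I" "I \<subseteq> (\<Union>k<4 * \<alpha>. P k)"
    and P_levels: "\<And>k. \<exists>lo. \<forall>t\<in>P k. lo \<le> K t \<and> K t \<le> lo + 2 * (pi / 8)"
    using interval_partition_by_levels[of I "4 * \<alpha>" "pi / 4" K, OF I _ _ K_mono osc] \<alpha>
    by auto
  have "\<exists>e. norm e = 1 \<and> (\<forall>t\<in>P k. 7/8 * norm (d1 t) \<le> inner (d1 t) e)" for k
  proof (cases "P k = {}")
    case True
    then show ?thesis
      by (intro exI[of _ "axis 1 1"]) simp
  next
    case False
    obtain lo where "\<And>t. t \<in> P k \<Longrightarrow> lo \<le> K t \<and> K t \<le> lo + 2 * (pi / 8)"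
      using P_levels[of k] by blast
    then obtain c where c: "c \<in> I" "\<And>t. t \<in> P k \<Longrightarrow> \<bar>K t - K c\<bar> \<le> pi / 8"
      using exists_level_center[of I "P k" K, OF I P(2) False K_cont] by blast
    have "7/8 * norm (d1 t) \<le> inner (d1 t) (sgn (d1 c))" if "t \<in> P k" for t
    proof (rule inner_sgn_ge_of_norm_sgn_diff_le)
      have "t \<in> I" using P(2) that by blast
      then show "d1 t \<noteq> 0" "d1 c \<noteq> 0"
        using immersed c(1) by auto
      have "norm (sgn (d1 t) - sgn (d1 c)) \<le> \<bar>K t - K c\<bar>"
        using chord[OF c(1) \<open>t \<in> I\<close>] chord[OF \<open>t \<in> I\<close> c(1)]
        by (cases "c \<le> t") (simp_all add: norm_minus_commute)
      with c(2)[OF that] pi_less_4 show "norm (sgn (d1 t) - sgn (d1 c)) \<le> 1 / 2"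
        by linarith
    qed
    then show ?thesis
      using immersed[OF c(1)] by (intro exI[of _ "sgn (d1 c)"]) (simp add: norm_sgn)
  qed
  with P that show ?thesis by blast
qed

lemma gaussian_has_integral:
  fixes c lam :: real
  assumes lam: "lam > 0"
  shows "((\<lambda>u. exp (- (u - c)\<^sup>2 / (4 * lam))) has_integral sqrt (4 * pi * lam)) UNIV"
proof -
  define \<sigma> where "\<sigma> = sqrt (2 * lam)"
  have "\<sigma> > 0" and \<sigma>2: "\<sigma>\<^sup>2 = 2 * lam"
    using lam by (simp_all add: \<sigma>_def)
  then have "(normal_density c \<sigma> has_integral 1) UNIV"
    using has_integral_integral_lborel[of "normal_density c \<sigma>"] by simp
  from has_integral_mult_right[OF this, of "sqrt (4 * pi * lam)"]
  show ?thesis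
    using lam by (simp add: normal_density_def \<sigma>2 real_sqrt_mult)
qed

lemma strict_mono_on_if_deriv_pos:
  fixes \<phi> :: "real \<Rightarrow> real"
  assumes S: "is_interval S"
    and der: "\<And>t. t \<in> S \<Longrightarrow> (\<phi> has_real_derivative \<phi>' t) (at t within S)"
    and pos: "\<And>t. t \<in> S \<Longrightarrow> \<phi>' t > 0"
  shows "strict_mono_on S \<phi>"
proof (rule strict_mono_onI)
  fix s t assume st: "s \<in> S" "t \<in> S" "s < t"
  have sub: "{s..t} \<subseteq> S"
    by (rule atLeastAtMost_subset_interval[OF S st(1,2)])
  show "\<phi> s < \<phi> t"
  proof (rule DERIV_pos_imp_increasing_open[OF \<open>s < t\<close>])
    show "continuous_on {s..t} \<phi>"
      by (rule continuous_on_subset[OF DERIV_continuous_on[OF der] sub])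
    fix x assume x: "s < x" "x < t"
    then have "x \<in> S" using sub by auto
    have "(\<phi> has_real_derivative \<phi>' x) (at x within {s<..<t})"
      by (rule DERIV_subset[OF der[OF \<open>x \<in> S\<close>]]) (use sub in auto)
    moreover have "at x within {s<..<t} = at x"
      by (rule at_within_open) (use x in auto)
    ultimately have "(\<phi> has_real_derivative \<phi>' x) (at x)"
      by simp
    then show "\<exists>y. (\<phi> has_real_derivative y) (at x) \<and> 0 < y"
      using pos[OF \<open>x \<in> S\<close>] by blast
  qed
qed

lemma nn_integral_comp_increasing_le:
  fixes \<phi> h :: "real \<Rightarrow> real"
  assumes S: "is_interval S"
    and der: "\<And>t. t \<in> S \<Longrightarrow> (\<phi> has_real_derivative \<phi>' t) (at t within S)"
    and pos: "\<And>t. t \<in> S \<Longrightarrow> \<phi>' t > 0"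
    and h: "(h has_integral H) UNIV" and h_nonneg: "\<And>u. h u \<ge> 0"
  shows "(\<integral>\<^sup>+t\<in>S. ennreal (h (\<phi> t) * \<phi>' t) \<partial>lborel) \<le> ennreal H"
proof -
  have inj: "inj_on \<phi> S"
    by (rule strict_mono_on_imp_inj_on[OF strict_mono_on_if_deriv_pos[OF S der pos]])
  have "is_interval (\<phi> ` S)"
    using S connected_continuous_image[OF DERIV_continuous_on[OF der]]
    by (simp add: is_interval_connected_1)
  then have "\<phi> ` S \<in> sets lebesgue"
    by (simp add: real_interval_borel_measurable)
  moreover have "h absolutely_integrable_on UNIV"
    using h h_nonneg by (simp add: absolutely_integrable_on_iff_nonneg has_integral_integrable)
  ultimately have h_abs: "h absolutely_integrable_on \<phi> ` S"
    using set_integrable_subset by blast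
  define b where "b = integral (\<phi> ` S) h"
  have "b \<le> H"
    unfolding b_def integral_unique[OF h, symmetric]
    by (rule integral_subset_le) (use h_abs h h_nonneg set_lebesgue_integral_eq_integral(1)
        has_integral_integrable in auto)
  have "S \<in> sets lebesgue"
    using S by (simp add: real_interval_borel_measurable)
  then have "(\<lambda>t. \<bar>\<phi>' t\<bar> * h (\<phi> t)) absolutely_integrable_on S \<and>
             integral S (\<lambda>t. \<bar>\<phi>' t\<bar> * h (\<phi> t)) = b"
    using has_absolute_integral_change_of_variables_1'[OF _ der inj] h_abs b_def by blast
  then have "((\<lambda>t. \<bar>\<phi>' t\<bar> * h (\<phi> t)) has_integral b) S"
    using integrable_integral set_lebesgue_integral_eq_integral(1) by fastforce
  then have "((\<lambda>t. h (\<phi> t) * \<phi>' t) has_integral b) S"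
    by (rule has_integral_eq[rotated]) (use pos in \<open>simp add: abs_of_pos\<close>)
  then have "(\<integral>\<^sup>+t\<in>S. ennreal (h (\<phi> t) * \<phi>' t) \<partial>lborel) = ennreal b"
    by (rule nn_integral_has_integral_lebesgue'[rotated]) (simp add: h_nonneg pos less_imp_le)
  with \<open>b \<le> H\<close> show ?thesis
    by (simp add: ennreal_leI)
qed

lemma nn_integral_gaussian_speed_le:
  fixes \<gamma> d :: "real \<Rightarrow> 'a::real_inner" and e x0 :: 'a
  assumes S: "is_interval S"
    and der: "\<And>t. t \<in> S \<Longrightarrow> (\<gamma> has_vector_derivative d t) (at t within S)"
    and nz: "\<And>t. t \<in> S \<Longrightarrow> d t \<noteq> 0"
    and e: "norm e = 1" and \<delta>: "\<delta> > 0" and lam: "lam > 0"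
    and dir: "\<And>t. t \<in> S \<Longrightarrow> \<delta> * norm (d t) \<le> inner (d t) e"
  shows "(\<integral>\<^sup>+t\<in>S. ennreal (exp (- (norm (\<gamma> t - x0))\<^sup>2 / (4 * lam)) * norm (d t)) \<partial>lborel)
           \<le> ennreal (sqrt (4 * pi * lam) / \<delta>)"
proof -
  define h where "h u = exp (- (u - inner x0 e)\<^sup>2 / (4 * lam)) / \<delta>" for u
  have proj: "((\<lambda>t. inner (\<gamma> t) e) has_real_derivative inner (d t) e) (at t within S)"
    if "t \<in> S" for t
    using bounded_linear.has_vector_derivative[OF bounded_linear_inner_left der[OF that]]
    by (simp add: has_real_derivative_iff_has_vector_derivative)
  have pos: "inner (d t) e > 0" if "t \<in> S" for t
    using dir[OF that] nz[OF that] \<delta> by (smt (verit) mult_pos_pos zero_less_norm_iff)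
  have h: "(h has_integral sqrt (4 * pi * lam) / \<delta>) UNIV"
    unfolding h_def by (rule has_integral_divide[OF gaussian_has_integral[OF lam]])
  have pointwise: "exp (- (norm (\<gamma> t - x0))\<^sup>2 / (4 * lam)) * norm (d t)
      \<le> h (inner (\<gamma> t) e) * inner (d t) e" if "t \<in> S" for t
  proof -
    have "\<bar>inner (\<gamma> t - x0) e\<bar> \<le> norm (\<gamma> t - x0)"
      using Cauchy_Schwarz_ineq2[of "\<gamma> t - x0" e] e by simp
    from power_mono[OF this abs_ge_zero, of 2]
    have "(inner (\<gamma> t) e - inner x0 e)\<^sup>2 \<le> (norm (\<gamma> t - x0))\<^sup>2"
      by (simp add: inner_diff_left)
    then have "exp (- (norm (\<gamma> t - x0))\<^sup>2 / (4 * lam))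
        \<le> exp (- (inner (\<gamma> t) e - inner x0 e)\<^sup>2 / (4 * lam))"
      using lam by (simp add: divide_right_mono)
    moreover have "norm (d t) \<le> inner (d t) e / \<delta>"
      using dir[OF that] \<delta> by (simp add: field_simps)
    ultimately have "exp (- (norm (\<gamma> t - x0))\<^sup>2 / (4 * lam)) * norm (d t)
        \<le> exp (- (inner (\<gamma> t) e - inner x0 e)\<^sup>2 / (4 * lam)) * (inner (d t) e / \<delta>)"
      by (rule mult_mono) simp_all
    then show ?thesis
      by (simp add: h_def)
  qed
  have "(\<integral>\<^sup>+t\<in>S. ennreal (exp (- (norm (\<gamma> t - x0))\<^sup>2 / (4 * lam)) * norm (d t)) \<partial>lborel)
      \<le> (\<integral>\<^sup>+t\<in>S. ennreal (h (inner (\<gamma> t) e) * inner (d t) e) \<partial>lborel)"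
    using pointwise by (intro nn_integral_mono) (auto split: split_indicator intro!: ennreal_leI)
  also have "\<dots> \<le> ennreal (sqrt (4 * pi * lam) / \<delta>)"
    by (rule nn_integral_comp_increasing_le[OF S proj pos h])
      (use \<delta> in \<open>auto simp: h_def intro!: divide_nonneg_pos\<close>)
  finally show ?thesis .
qed

lemma nn_set_integral_le_sum_cover:
  fixes f :: "'a \<Rightarrow> ennreal" and n :: nat
  assumes cover: "A \<subseteq> (\<Union>k<n. P k)"
    and meas: "\<And>k. (\<lambda>x. f x * indicator (P k) x) \<in> borel_measurable M"
  shows "(\<integral>\<^sup>+x\<in>A. f x \<partial>M) \<le> (\<Sum>k<n. \<integral>\<^sup>+x\<in>P k. f x \<partial>M)"
proof -
  have "(\<integral>\<^sup>+x\<in>A. f x \<partial>M) \<le> (\<integral>\<^sup>+x. (\<Sum>k<n. f x * indicator (P k) x) \<partial>M)"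
  proof (rule nn_integral_mono)
    fix x
    show "f x * indicator A x \<le> (\<Sum>k<n. f x * indicator (P k) x)"
    proof (cases "x \<in> A")
      case True
      then obtain k where "k < n" "x \<in> P k"
        using cover by blast
      then have "f x * indicator A x = f x * indicator (P k) x"
        using True by simp
      also have "\<dots> \<le> (\<Sum>k<n. f x * indicator (P k) x)"
        by (rule member_le_sum) (use \<open>k < n\<close> in auto)
      finally show ?thesis .
    qed simp
  qed
  also have "\<dots> = (\<Sum>k<n. \<integral>\<^sup>+x\<in>P k. f x \<partial>M)"
    by (rule nn_integral_sum) (rule meas)
  finally show ?thesis .
qed

lemma nn_integral_gaussian_speed_le_pieces:
  fixes \<gamma> d :: "real \<Rightarrow> 'a::real_inner" and x0 :: 'a and P :: "nat \<Rightarrow> real set"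
  assumes I: "is_interval I"
    and der: "\<And>t. t \<in> I \<Longrightarrow> (\<gamma> has_vector_derivative d t) (at t within I)"
    and d_cont: "continuous_on I d"
    and nz: "\<And>t. t \<in> I \<Longrightarrow> d t \<noteq> 0"
    and P: "\<And>k. is_interval (P k)" "\<And>k. P k \<subseteq> I" "I \<subseteq> (\<Union>k<n. P k)"
    and dir: "\<And>k. \<exists>e. norm e = 1 \<and> (\<forall>t\<in>P k. \<delta> * norm (d t) \<le> inner (d t) e)"
    and \<delta>: "\<delta> > 0" and lam: "lam > 0"
  shows "(\<integral>\<^sup>+t\<in>I. ennreal (exp (- (norm (\<gamma> t - x0))\<^sup>2 / (4 * lam)) * norm (d t)) \<partial>lborel)
           \<le> ennreal (real n * (sqrt (4 * pi * lam) / \<delta>))"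
proof -
  define F where "F t = exp (- (norm (\<gamma> t - x0))\<^sup>2 / (4 * lam)) * norm (d t)" for t
  have F_cont: "continuous_on I F"
    unfolding F_def
    by (intro continuous_intros continuous_on_vector_derivative[OF der] d_cont) (use lam in auto)
  have meas: "(\<lambda>t. ennreal (F t) * indicator (P k) t) \<in> borel_measurable lborel" for k
  proof -
    have "(\<lambda>t. indicator (P k) t *\<^sub>R F t) \<in> borel_measurable borel"
      by (rule borel_measurable_continuous_on_indicator[OF real_interval_borel_measurable[OF P(1)]
            continuous_on_subset[OF F_cont P(2)]])
    then have "(\<lambda>t. ennreal (indicator (P k) t *\<^sub>R F t)) \<in> borel_measurable borel"
      by (rule measurable_compose[OF _ measurable_ennreal])
    moreover have "(\<lambda>t. ennreal (indicator (P k) t *\<^sub>R F t))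
        = (\<lambda>t. ennreal (F t) * indicator (P k) t)"
      by (auto simp: fun_eq_iff split: split_indicator)
    ultimately show ?thesis
      by simp
  qed
  have piece: "(\<integral>\<^sup>+t\<in>P k. ennreal (F t) \<partial>lborel) \<le> ennreal (sqrt (4 * pi * lam) / \<delta>)" for k
  proof -
    obtain e where "norm e = 1" "\<And>t. t \<in> P k \<Longrightarrow> \<delta> * norm (d t) \<le> inner (d t) e"
      using dir by blast
    then show ?thesis
      unfolding F_def using P(2)[of k]
      by (intro nn_integral_gaussian_speed_le[OF P(1) _ _ _ \<delta> lam])
        (auto intro: has_vector_derivative_within_subset[OF der] dest: nz)
  qed
  have "(\<integral>\<^sup>+t\<in>I. ennreal (F t) \<partial>lborel) \<le> (\<Sum>k<n. \<integral>\<^sup>+t\<in>P k. ennreal (F t) \<partial>lborel)"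
    by (rule nn_set_integral_le_sum_cover[OF P(3) meas])
  also have "\<dots> \<le> (\<Sum>k<n. ennreal (sqrt (4 * pi * lam) / \<delta>))"
    by (rule sum_mono) (rule piece)
  also have "\<dots> = of_nat n * ennreal (sqrt (4 * pi * lam) / \<delta>)"
    by simp
  also have "\<dots> = ennreal (real n * (sqrt (4 * pi * lam) / \<delta>))"
    by (subst ennreal_mult)
      (use \<delta> lam in \<open>auto simp: ennreal_of_nat_eq_real_of_nat intro!: divide_nonneg_pos\<close>)
  finally show ?thesis
    unfolding F_def .
qed

lemma entropy_le_of_nn_integral_le:
  assumes C: "C \<ge> 0"
    and bound: "\<And>x0 lam. lam > 0 \<Longrightarrow>
      (\<integral>\<^sup>+t\<in>I. ennreal (exp (- (norm (gamma t - x0))\<^sup>2 / (4 * lam)) * norm (d1 t)) \<partial>lborel)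
        \<le> ennreal (C * sqrt (4 * pi * lam))"
  shows "entropy gamma d1 I \<le> ennreal C"
  unfolding entropy_def
proof (rule SUP_least)
  fix p :: "(real^2) \<times> real"
  assume "p \<in> UNIV \<times> {0<..}"
  then have lam: "snd p > 0" by auto
  have "gauss_F gamma d1 I (fst p) (snd p)
      \<le> ennreal (1 / sqrt (4 * pi * snd p)) * ennreal (C * sqrt (4 * pi * snd p))"
    unfolding gauss_F_def by (rule mult_left_mono[OF bound[OF lam]]) simp
  also have "\<dots> = ennreal C"
    using lam C by (simp flip: ennreal_mult)
  finally show "gauss_F gamma d1 I (fst p) (snd p) \<le> ennreal C" .
qed

theorem theorem3p3:
  fixes gamma d1 d2 :: "real \<Rightarrow> real^2" and I :: "real set" and \<alpha> :: nat
  assumes interval: "is_interval I"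
    and d1: "\<And>t. t \<in> I \<Longrightarrow> (gamma has_vector_derivative d1 t) (at t within I)"
    and d2: "\<And>t. t \<in> I \<Longrightarrow> (d1 has_vector_derivative d2 t) (at t within I)"
    and cont2: "continuous_on I d2"
    and immersed: "\<And>t. t \<in> I \<Longrightarrow> d1 t \<noteq> 0"
    and alpha_pos: "\<alpha> \<ge> 1"
    and tc: "total_curvature d1 d2 I \<le> ennreal (real \<alpha> * pi)"
  shows "entropy gamma d1 I \<le> ennreal (4 * real \<alpha> * sqrt 2)"
proof -
  obtain P where P: "\<And>k. is_interval (P k)" "\<And>k. P k \<subseteq> I" "I \<subseteq> (\<Union>k<4 * \<alpha>. P k)"
    and dir: "\<And>k. \<exists>e. norm e = 1 \<and> (\<forall>t\<in>P k. 7/8 * norm (d1 t) \<le> inner (d1 t) e)"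
    using curve_partition_into_turning_pieces[OF interval d2 cont2 immersed alpha_pos tc] by blast
  have "entropy gamma d1 I \<le> ennreal (4 * real \<alpha> * (8 / 7))"
  proof (rule entropy_le_of_nn_integral_le)
    fix x0 :: "real^2" and lam :: real
    assume "lam > 0"
    from nn_integral_gaussian_speed_le_pieces[OF interval d1 continuous_on_vector_derivative[OF d2]
        immersed P dir _ this, of x0]
    show "(\<integral>\<^sup>+t\<in>I. ennreal (exp (- (norm (gamma t - x0))\<^sup>2 / (4 * lam)) * norm (d1 t)) \<partial>lborel)
        \<le> ennreal (4 * real \<alpha> * (8 / 7) * sqrt (4 * pi * lam))"
      by (simp add: field_simps)
  qed simp
  also have "\<dots> \<le> ennreal (4 * real \<alpha> * sqrt 2)"
    by (intro ennreal_leI mult_left_mono real_le_rsqrt) (simp_all add: power2_eq_square)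
  finally show ?thesis .
qed

end
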